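(* Let $S$ and $R$ be rings, let $\rho: S \to R$ be a surjective ring homomorphism, and let $F_2: R \to 2^{R}$ be a set-valued homomorphism. Define $F_1: S \to 2^{S}$ by $F_1(x) = \{s_1 \in S : \rho(s_1) \in F_2(\rho(x))\}$ for all $x \in S$. Then for every $A \subseteq S$, $\rho(\underline{F_1}(A)) = \underline{F_2}(\rho(A))$.
   Context: For a set-valued map $F: X \to 2^{Y}$ (assigning to each $x \in X$ a subset $F(x) \subseteq Y$) and $M \subseteq Y$, the lower approximation is $\underline{F}(M) = \{x \in X : F(x) \cap M \neq \emptyset\}$. For a ring $R$, $2^{R}$ denotes the set of subsets of $R$. A set-valued homomorphism $F: R \to 2^{R}$ satisfies $F(x+y) = \{a+b : a \in F(x), b \in F(y)\}$ and $F(xy) = \{ab : a \in F(x), b \in F(y)\}$ for all $x, y \in R$. *)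

theory Defs
  imports Main
begin

definition lower_approx :: "('a \<Rightarrow> 'b set) \<Rightarrow> 'b set \<Rightarrow> 'a set" where
  "lower_approx F M = {x. F x \<inter> M \<noteq> {}}"

definition set_valued_hom :: "('a::ring \<Rightarrow> 'a set) \<Rightarrow> bool" where
  "set_valued_hom F \<longleftrightarrow>
     (\<forall>x y. F (x + y) = {a + b | a b. a \<in> F x \<and> b \<in> F y}) \<and>
     (\<forall>x y. F (x * y) = {a * b | a b. a \<in> F x \<and> b \<in> F y})"

definition ring_hom_map :: "('a::ring \<Rightarrow> 'b::ring) \<Rightarrow> bool" where
  "ring_hom_map \<rho> \<longleftrightarrow>
     (\<forall>x y. \<rho> (x + y) = \<rho> x + \<rho> y) \<and> (\<forall>x y. \<rho> (x * y) = \<rho> x * \<rho> y)"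

end

theory Submission
  imports Defs
begin

text \<open>\<open>F1\<close> is the pullback \<open>x \<mapsto> \<rho> -` F2 (\<rho> x)\<close>, and the claim is purely set-theoretic:
  only surjectivity of \<open>\<rho>\<close> is used, the homomorphism hypotheses are deliberately left unused.\<close>

lemma image_lower_approx_vimage_subset:
  "f ` lower_approx (\<lambda>x. f -` F (f x)) A \<subseteq> lower_approx F (f ` A)"
  by (auto simp: lower_approx_def)

lemma lower_approx_image_subset_image_vimage:
  assumes "surj f"
  shows "lower_approx F (f ` A) \<subseteq> f ` lower_approx (\<lambda>x. f -` F (f x)) A"
proof
  fix y assume "y \<in> lower_approx F (f ` A)"
  then obtain a where "a \<in> A" and "f a \<in> F y"
    by (auto simp: lower_approx_def)
  obtain x where y: "y = f x"
    using \<open>surj f\<close> by (metis surjD)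
  have "x \<in> lower_approx (\<lambda>x. f -` F (f x)) A"
    using \<open>a \<in> A\<close> \<open>f a \<in> F y\<close> y by (auto simp: lower_approx_def)
  then show "y \<in> f ` lower_approx (\<lambda>x. f -` F (f x)) A"
    using y by blast
qed

lemma image_lower_approx_vimage:
  assumes "surj f"
  shows "f ` lower_approx (\<lambda>x. f -` F (f x)) A = lower_approx F (f ` A)"
  using image_lower_approx_vimage_subset lower_approx_image_subset_image_vimage[OF assms]
  by (rule equalityI)

theorem theorem4p2:
  fixes \<rho> :: "'s::ring \<Rightarrow> 'r::ring"
    and F2 :: "'r \<Rightarrow> 'r set"
    and F1 :: "'s \<Rightarrow> 's set"
    and A :: "'s set"
  assumes "ring_hom_map \<rho>"
    and "surj \<rho>"
    and "set_valued_hom F2"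
    and "\<And>x. F1 x = {s1. \<rho> s1 \<in> F2 (\<rho> x)}"
  shows "\<rho> ` lower_approx F1 A = lower_approx F2 (\<rho> ` A)"
proof -
  have "F1 = (\<lambda>x. \<rho> -` F2 (\<rho> x))"
    using assms(4) by (auto simp: vimage_def)
  then show ?thesis
    using image_lower_approx_vimage[OF assms(2)] by simp
qed

end
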